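(* Let $\mathcal B$ be a polyhedral complex in $\mathbb R^d$ that is pure of dimension $d-1$. If every face $\tau\in\mathcal B$ of dimension $d-2$ is contained in at least three faces of $\mathcal B$ of dimension $d-1$, then $\mathcal B$ is the unique coarsest polyhedral complex with support $|\mathcal B|$; that is, every polyhedral complex $\mathcal C$ with $|\mathcal C|=|\mathcal B|$ is a refinement of $\mathcal B$ (each facet of $\mathcal C$ is contained in a facet of $\mathcal B$).
   Context: A polyhedral complex is a finite collection of polyhedra, containing $\emptyset$, closed under taking faces, in which any two members intersect in a common face. Its support $|\mathcal B|$ is the union of its members; it is pure of dimension $k$ if all inclusion-maximal members have dimension $k$. *)

theory Defs
  imports "HOL-Analysis.Analysis"
begin

text \<open>Polyhedra, faces and dimensions are the HOL-Analysis notions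
(polyhedron, face_of, aff_dim; the empty set has aff_dim -1).\<close>

definition polyhedral_complex :: "'a::euclidean_space set set \<Rightarrow> bool" where
  "polyhedral_complex B \<longleftrightarrow>
     finite B \<and> {} \<in> B \<and> (\<forall>P\<in>B. polyhedron P) \<and>
     (\<forall>P\<in>B. \<forall>F. F face_of P \<longrightarrow> F \<in> B) \<and>
     (\<forall>P\<in>B. \<forall>Q\<in>B. (P \<inter> Q) face_of P \<and> (P \<inter> Q) face_of Q)"

definition support :: "'a set set \<Rightarrow> 'a set" where
  "support B = \<Union>B"

definition facets :: "'a set set \<Rightarrow> 'a set set" where
  "facets B = {P \<in> B. \<forall>Q\<in>B. P \<subseteq> Q \<longrightarrow> Q = P}"

definition pure_of_dim :: "'a::euclidean_space set set \<Rightarrow> int \<Rightarrow> bool" where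
  "pure_of_dim B k \<longleftrightarrow> (\<forall>P\<in>facets B. aff_dim P = k)"

definition refines :: "'a set set \<Rightarrow> 'a set set \<Rightarrow> bool" where
  "refines C B \<longleftrightarrow> (\<forall>P\<in>facets C. \<exists>Q\<in>facets B. P \<subseteq> Q)"

end

theory Submission
  imports Defs
begin

text \<open>Let S be a facet of C and x a point of its relative interior. Since the support of B
is negligible, S has dimension at most d - 1, and near x the support is contained in S, so
every (d - 1)-cell of B through x spans the same hyperplane as S. If x lay on the relative
boundary of a facet s of B, it would lie on a ridge of s; the at least three (d - 1)-cells
through that ridge would then be coplanar and pairwise meet exactly in the ridge, which is
impossible because two of them leave the ridge on the same side and so overlap beyond it.
Hence the relative interior of S meets each facet s of B in a relatively open and closed
subset; by connectedness it lies in one such s, and so does its closure S.\<close>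

lemma mem_affine_hull_iff_span:
  fixes F :: "'a::real_vector set"
  assumes "x \<in> affine hull F"
  shows "z \<in> affine hull F \<longleftrightarrow> z - x \<in> span ((\<lambda>y. - x + y) ` F)"
proof -
  have "z \<in> (\<lambda>v. x + v) ` V \<longleftrightarrow> z - x \<in> V" for V
    by (auto simp: image_iff algebra_simps intro: bexI[of _ "z - x"])
  thus ?thesis by (subst affine_hull_span_gen[OF assms])
qed

lemma eventually_step_into_convex:
  fixes F s :: "'a::euclidean_space set"
  assumes x: "x \<in> rel_interior F" and Fs: "F \<subseteq> s" and s: "convex s" and q: "q \<in> s"
    and t: "t > 0" and q_coord: "q - x - t *\<^sub>R w \<in> span ((\<lambda>y. - x + y) ` F)"
  shows "\<forall>\<^sub>F c in at_right 0. x + c *\<^sub>R w \<in> s"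
proof -
  define g where "g = q - x - t *\<^sub>R w"
  \<comment> \<open>x + c w is a convex combination of q and y c, a point of affine hull F tending to x\<close>
  define y where "y c = x - (c / (t - c)) *\<^sub>R g" for c
  obtain e where e: "e > 0" "ball x e \<inter> affine hull F \<subseteq> F"
    using x mem_rel_interior_ball by blast
  have xF: "x \<in> affine hull F"
    by (meson x rel_interior_subset hull_subset subsetD)
  have "(y \<longlongrightarrow> x - (0 / (t - 0)) *\<^sub>R g) (at_right 0)"
    unfolding y_def using t by (intro tendsto_intros) auto
  hence "(y \<longlongrightarrow> x) (at_right 0)"
    by simp
  hence "\<forall>\<^sub>F c in at_right 0. y c \<in> ball x e"
    using tendstoD e(1) by (simp add: dist_commute)
  moreover have "\<forall>\<^sub>F c in at_right 0. c \<in> {0<..<t}"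
    using t by (rule eventually_at_right_real)
  ultimately show ?thesis
  proof eventually_elim
    case (elim c)
    have "y c - x \<in> span ((\<lambda>y. - x + y) ` F)"
      using q_coord by (simp add: y_def g_def span_neg span_mul)
    hence "y c \<in> F"
      using e(2) elim(1) mem_affine_hull_iff_span[OF xF] by blast
    hence "(1 - c / t) *\<^sub>R y c + (c / t) *\<^sub>R q \<in> s"
      using s q Fs elim(2) by (intro convexD) auto
    moreover have "(1 - c / t) *\<^sub>R y c + (c / t) *\<^sub>R q = x + c *\<^sub>R w"
    proof -
      have "(1 - c / t) * (c / (t - c)) = c / t"
        using elim(2) by (auto simp: field_simps)
      hence "(1 - c / t) *\<^sub>R y c = (1 - c / t) *\<^sub>R x - (c / t) *\<^sub>R g"
        by (simp add: y_def scaleR_diff_right)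
      thus ?thesis
        using t by (simp add: g_def algebra_simps)
    qed
    ultimately show ?case by simp
  qed
qed

lemma codim1_affine_hull_coordinate:
  fixes F s :: "'a::euclidean_space set"
  assumes x: "x \<in> F" and Fs: "F \<subseteq> s" and dim: "aff_dim F = aff_dim s - 1"
    and p: "p \<in> s" "p \<notin> affine hull F"
    and q: "q \<in> affine hull s" "q \<notin> affine hull F"
  obtains t where "t \<noteq> 0" "q - x - t *\<^sub>R (p - x) \<in> span ((\<lambda>y. - x + y) ` F)"
proof -
  have "aff_dim (insert p F) = aff_dim s"
    using p dim by (simp add: aff_dim_insert)
  moreover have "insert p F \<subseteq> s"
    using p Fs by blast
  ultimately have "affine hull (insert p F) = affine hull s"
    using aff_dim_eq_full_gen by blast
  hence "q - x \<in> span (insert (p - x) ((\<lambda>y. - x + y) ` F))"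
    using q(1) mem_affine_hull_iff_span[OF hull_inc[of x "insert p F"]] x by simp
  then obtain t where t: "q - x - t *\<^sub>R (p - x) \<in> span ((\<lambda>y. - x + y) ` F)"
    unfolding span_insert by blast
  moreover have "t \<noteq> 0"
  proof
    assume "t = 0"
    with t have "q - x \<in> span ((\<lambda>y. - x + y) ` F)"
      by simp
    with q(2) show False
      using mem_affine_hull_iff_span[OF hull_inc[OF x]] by blast
  qed
  ultimately show ?thesis
    using that by blast
qed

lemma convex_Int_not_subset_same_side:
  fixes F a b :: "'a::euclidean_space set" and x w :: 'a
  defines "L \<equiv> span ((\<lambda>y. - x + y) ` F)"
  assumes x: "x \<in> rel_interior F" and Fa: "F \<subseteq> a" and Fb: "F \<subseteq> b"
    and a: "convex a" and b: "convex b" and p: "p \<in> a" and q: "q \<in> b"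
    and s: "s > 0" and t: "t > 0"
    and ps: "p - x - s *\<^sub>R w \<in> L" and qt: "q - x - t *\<^sub>R w \<in> L" and w: "w \<notin> L"
  shows "\<not> a \<inter> b \<subseteq> F"
proof
  assume ab: "a \<inter> b \<subseteq> F"
  have "\<forall>\<^sub>F c in at_right 0. x + c *\<^sub>R w \<in> a"
    using eventually_step_into_convex[OF x Fa a p s] ps unfolding L_def .
  moreover have "\<forall>\<^sub>F c in at_right 0. x + c *\<^sub>R w \<in> b"
    using eventually_step_into_convex[OF x Fb b q t] qt unfolding L_def .
  moreover have "\<forall>\<^sub>F c in at_right 0. c \<in> {0<..<1::real}"
    by (rule eventually_at_right_real) simp
  ultimately have "\<forall>\<^sub>F c in at_right 0. x + c *\<^sub>R w \<in> a \<inter> b \<and> c \<noteq> 0"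
    by eventually_elim auto
  then obtain c where c: "x + c *\<^sub>R w \<in> a \<inter> b" "c \<noteq> 0"
    using eventually_happens'[OF trivial_limit_at_right_real] by blast
  have "x \<in> affine hull F"
    by (meson x rel_interior_subset hull_subset subsetD)
  moreover have "x + c *\<^sub>R w \<in> affine hull F"
    using c(1) ab by (blast intro: hull_inc)
  ultimately have "c *\<^sub>R w \<in> L"
    using mem_affine_hull_iff_span[of x F "x + c *\<^sub>R w"] unfolding L_def by simp
  hence "(1 / c) *\<^sub>R (c *\<^sub>R w) \<in> L"
    unfolding L_def by (rule span_mul)
  thus False
    using c(2) w by simp
qed

lemma no_three_convex_sheets_along_codim1_set:
  fixes F s1 s2 s3 :: "'a::euclidean_space set"
  assumes convex: "convex s1" "convex s2" "convex s3"
    and hull: "affine hull s2 = affine hull s1" "affine hull s3 = affine hull s1"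
    and F: "F \<noteq> {}" "aff_dim F = aff_dim s1 - 1"
    and meet: "s1 \<inter> s2 = F" "s1 \<inter> s3 = F" "s2 \<inter> s3 = F"
  shows False
proof -
  have "convex F"
    using meet(1) convex convex_Int by blast
  then obtain x where x: "x \<in> rel_interior F"
    using F(1) rel_interior_eq_empty by blast
  hence xF: "x \<in> F"
    using rel_interior_subset by blast
  let ?L = "span ((\<lambda>y. - x + y) ` F)"
  have off_F: "\<exists>p\<in>s. p \<notin> affine hull F" if "affine hull s = affine hull s1" for s
  proof (rule ccontr)
    assume "\<not> ?thesis"
    hence "aff_dim s \<le> aff_dim F"
      by (metis aff_dim_affine_hull aff_dim_subset subsetI)
    with that F(2) show False
      by (metis aff_dim_affine_hull linorder_not_le zle_diff1_eq order_refl)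
  qed
  obtain p1 p2 p3 where p: "p1 \<in> s1" "p2 \<in> s2" "p3 \<in> s3"
    and off: "p1 \<notin> affine hull F" "p2 \<notin> affine hull F" "p3 \<notin> affine hull F"
    using off_F[OF refl] off_F[OF hull(1)] off_F[OF hull(2)] by blast
  have Fs: "F \<subseteq> s1" "F \<subseteq> s2" "F \<subseteq> s3"
    using meet by blast+
  define w where "w = p1 - x"
  have w: "w \<notin> ?L" "- w \<notin> ?L"
    using off(1) mem_affine_hull_iff_span[OF hull_inc[OF xF]] span_neg
    unfolding w_def by (metis minus_minus)+
  have t1: "p1 - x - 1 *\<^sub>R w \<in> ?L"
    by (simp add: w_def span_zero)
  obtain t2 where t2: "t2 \<noteq> 0" "p2 - x - t2 *\<^sub>R w \<in> ?L"
    using codim1_affine_hull_coordinate[OF xF Fs(1) F(2) p(1) off(1) _ off(2)]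
      hull(1) hull_inc[OF p(2)] unfolding w_def by blast
  obtain t3 where t3: "t3 \<noteq> 0" "p3 - x - t3 *\<^sub>R w \<in> ?L"
    using codim1_affine_hull_coordinate[OF xF Fs(1) F(2) p(1) off(1) _ off(3)]
      hull(2) hull_inc[OF p(3)] unfolding w_def by blast
  \<comment> \<open>two of the three sheets leave F on the same side\<close>
  consider "t2 > 0" | "t3 > 0" | "t2 < 0" "t3 < 0"
    using t2(1) t3(1) by linarith
  thus False
  proof cases
    case 1
    with convex_Int_not_subset_same_side[OF x Fs(1,2) convex(1,2) p(1,2) _ _ t1 t2(2) w(1)]
    show False using meet(1) by simp
  next
    case 2
    with convex_Int_not_subset_same_side[OF x Fs(1,3) convex(1,3) p(1,3) _ _ t1 t3(2) w(1)]
    show False using meet(2) by simp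
  next
    case 3
    have "p2 - x - (- t2) *\<^sub>R (- w) \<in> ?L" "p3 - x - (- t3) *\<^sub>R (- w) \<in> ?L"
      using t2(2) t3(2) by simp_all
    with 3 convex_Int_not_subset_same_side[OF x Fs(2,3) convex(2,3) p(2,3), of "- t2" "- t3" "- w"]
    show False using meet(3) w(2) by simp
  qed
qed

lemma face_of_Int_eq_codim1_face:
  fixes a b F :: "'a::euclidean_space set"
  assumes a: "convex a" and b: "convex b" and "a \<noteq> b" and dim_ab: "aff_dim a = aff_dim b"
    and Fa: "F face_of a" and Fb: "F face_of b" and dim_F: "aff_dim F = aff_dim a - 1"
    and ab_a: "(a \<inter> b) face_of a" and ab_b: "(a \<inter> b) face_of b"
  shows "a \<inter> b = F"
proof (rule ccontr)
  assume "a \<inter> b \<noteq> F"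
  moreover have "F face_of (a \<inter> b)"
    using Fa Fb by (intro face_of_subset[OF Fa]) (auto dest: face_of_imp_subset)
  ultimately have F_lt: "aff_dim F < aff_dim (a \<inter> b)"
    using face_of_aff_dim_lt[OF convex_Int[OF a b]] by blast
  have "a \<inter> b = a"
  proof (rule ccontr)
    assume "a \<inter> b \<noteq> a"
    with face_of_aff_dim_lt[OF a ab_a] have "aff_dim (a \<inter> b) < aff_dim a"
      by blast
    with F_lt dim_F show False
      by linarith
  qed
  moreover have "a \<inter> b = b"
  proof (rule ccontr)
    assume "a \<inter> b \<noteq> b"
    with face_of_aff_dim_lt[OF b ab_b] have "aff_dim (a \<inter> b) < aff_dim b"
      by blast
    with F_lt dim_F dim_ab show False
      by linarith
  qed
  ultimately show False
    using \<open>a \<noteq> b\<close> by simp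
qed

lemma aff_dim_lt_DIM_if_negligible:
  fixes S :: "'a::euclidean_space set"
  assumes "convex S" "negligible S"
  shows "aff_dim S < DIM('a)"
proof (rule ccontr)
  assume "\<not> aff_dim S < DIM('a)"
  hence "affine hull S = UNIV"
    using aff_dim_le_DIM[of S] aff_dim_eq_full by fastforce
  hence "rel_interior S = interior S"
    by (rule rel_interior_interior)
  moreover have "interior S = {}"
    using assms negligible_convex_interior by blast
  ultimately have "S = {}"
    using \<open>convex S\<close> rel_interior_eq_empty by blast
  with \<open>\<not> aff_dim S < DIM('a)\<close> show False
    by simp
qed

lemma convex_subset_closed_if_locally_in:
  fixes S s :: "'a::euclidean_space set"
  assumes S: "convex S" "closed S" and s: "closed s"
    and x0: "x0 \<in> rel_interior S" "x0 \<in> s"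
    and locally: "\<And>x. x \<in> rel_interior S \<Longrightarrow> x \<in> s \<Longrightarrow> \<exists>e>0. ball x e \<inter> rel_interior S \<subseteq> s"
  shows "S \<subseteq> s"
proof -
  have "openin (top_of_set (rel_interior S)) (rel_interior S \<inter> s)"
    unfolding openin_contains_ball
  proof (intro conjI ballI)
    fix x
    assume "x \<in> rel_interior S \<inter> s"
    then obtain e where "e > 0" "ball x e \<inter> rel_interior S \<subseteq> s"
      using locally by blast
    thus "\<exists>e>0. ball x e \<inter> rel_interior S \<subseteq> rel_interior S \<inter> s"
      by blast
  qed blast
  moreover have "closedin (top_of_set (rel_interior S)) (rel_interior S \<inter> s)"
    using s closedin_closed_Int by blast
  moreover have "connected (rel_interior S)"
    using S(1) by (intro convex_connected convex_rel_interior)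
  ultimately have "rel_interior S \<inter> s = {} \<or> rel_interior S \<inter> s = rel_interior S"
    unfolding connected_clopen by blast
  hence "rel_interior S \<subseteq> s"
    using x0 by blast
  hence "closure (rel_interior S) \<subseteq> s"
    using s closure_minimal by blast
  thus ?thesis
    using convex_closure_rel_interior[OF S(1)] S(2) closure_closed by simp
qed

lemma facets_subset: "facets B \<subseteq> B"
  by (auto simp: facets_def)

lemma polyhedral_complex_imp_polyhedron:
  "polyhedral_complex B \<Longrightarrow> P \<in> B \<Longrightarrow> polyhedron P"
  by (simp add: polyhedral_complex_def)

lemma exists_facet_superset:
  assumes "finite B" "P \<in> B"
  shows "\<exists>Q\<in>facets B. P \<subseteq> Q"
  using finite_has_maximal2[OF assms] by (auto simp: facets_def)

lemma polyhedral_complex_no_three_coplanar_cofaces: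
  fixes B :: "'a::euclidean_space set set"
  assumes B: "polyhedral_complex B" and F: "F \<in> B" "F \<noteq> {}"
    and s: "s1 \<in> B" "s2 \<in> B" "s3 \<in> B" "s1 \<noteq> s2" "s1 \<noteq> s3" "s2 \<noteq> s3"
    and Fs: "F \<subseteq> s1" "F \<subseteq> s2" "F \<subseteq> s3" and dim: "aff_dim F = aff_dim s1 - 1"
    and hull: "affine hull s2 = affine hull s1" "affine hull s3 = affine hull s1"
  shows False
proof -
  have face_Int: "(P \<inter> Q) face_of P" if "P \<in> B" "Q \<in> B" for P Q
    using B that by (simp add: polyhedral_complex_def)
  have sheet: "P \<in> B \<and> convex P \<and> F face_of P \<and> aff_dim P = aff_dim s1"
    if "P \<in> {s1, s2, s3}" for P
  proof -
    have P: "P \<in> B" "F \<subseteq> P" "affine hull P = affine hull s1"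
      using that s Fs hull by auto
    have "convex P"
      using polyhedral_complex_imp_polyhedron[OF B P(1)] polyhedron_imp_convex by blast
    moreover have "F face_of P"
      using face_Int[OF P(1) F(1)] P(2) by (simp add: Int_absorb1)
    moreover have "aff_dim P = aff_dim s1"
      using P(3) by (metis aff_dim_affine_hull)
    ultimately show ?thesis
      using P(1) by blast
  qed
  have meet: "P \<inter> Q = F" if "P \<in> {s1, s2, s3}" "Q \<in> {s1, s2, s3}" "P \<noteq> Q" for P Q
  proof (rule face_of_Int_eq_codim1_face)
    show "(P \<inter> Q) face_of Q"
      using face_Int[of Q P] sheet that by (simp add: Int_commute)
  qed (use sheet[OF that(1)] sheet[OF that(2)] that(3) face_Int dim in auto)
  show False
    using no_three_convex_sheets_along_codim1_set[OF _ _ _ hull F(2) dim] sheet meet s(4-6)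
    by simp
qed

lemma polyhedral_complex_facet_locally_covers:
  fixes C :: "'a::euclidean_space set set"
  assumes C: "polyhedral_complex C" and S: "S \<in> facets C" and x: "x \<in> rel_interior S"
  obtains r where "r > 0" "support C \<inter> ball x r \<subseteq> S"
proof -
  have SC: "S \<in> C" and S_max: "\<And>Q. Q \<in> C \<Longrightarrow> S \<subseteq> Q \<Longrightarrow> Q = S"
    using S by (auto simp: facets_def)
  define K where "K = \<Union>{T \<in> C. x \<notin> T}"
  have "closed K"
    using C polyhedron_imp_closed unfolding K_def polyhedral_complex_def
    by (intro closed_Union) auto
  moreover have "x \<notin> K"
    by (auto simp: K_def)
  ultimately obtain r where r: "r > 0" "ball x r \<subseteq> - K"
    using open_contains_ball[of "- K"] by (auto simp: open_Compl)
  have "T \<subseteq> S" if T: "T \<in> C" "T \<inter> ball x r \<noteq> {}" for T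
  proof -
    have "x \<in> T"
      using T r unfolding K_def by blast
    have "(T \<inter> S) face_of S"
      using C T(1) SC by (simp add: polyhedral_complex_def)
    moreover have "\<not> T \<inter> S \<subseteq> rel_frontier S"
      using \<open>x \<in> T\<close> x rel_interior_subset by (auto simp: rel_frontier_def)
    ultimately have "T \<inter> S = S"
      using face_of_subset_rel_frontier by blast
    thus ?thesis
      using S_max T(1) by blast
  qed
  hence "support C \<inter> ball x r \<subseteq> S"
    unfolding support_def by blast
  with r(1) show ?thesis
    using that by blast
qed

lemma affine_hull_eq_near_rel_interior_facet:
  fixes C :: "'a::euclidean_space set set"
  assumes C: "polyhedral_complex C" and S: "S \<in> facets C" and x: "x \<in> rel_interior S"
    and t: "convex t" "x \<in> t" "t \<subseteq> support C" and dim: "aff_dim S \<le> aff_dim t"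
  shows "affine hull t = affine hull S"
proof -
  obtain r where r: "r > 0" "support C \<inter> ball x r \<subseteq> S"
    using polyhedral_complex_facet_locally_covers[OF C S x] by blast
  have "t \<inter> ball x r \<noteq> {}"
    using t(2) r(1) by auto
  hence "affine hull t = affine hull (t \<inter> ball x r)"
    using affine_hull_convex_Int_open[OF t(1) open_ball] by simp
  also have "\<dots> \<subseteq> affine hull S"
    using t(3) r(2) by (intro hull_mono) blast
  finally have hull_sub: "affine hull t \<subseteq> affine hull S" .
  hence "aff_dim t = aff_dim (affine hull S)"
    using aff_dim_subset[OF hull_sub] dim by simp
  with hull_sub show ?thesis
    using aff_dim_eq_full_gen[of t "affine hull S"] hull_subset[of t affine] by auto
qed

lemma negligible_support_of_pure:
  fixes B :: "'a::euclidean_space set set"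
  assumes B: "polyhedral_complex B" and pure: "pure_of_dim B k" and k: "k < DIM('a)"
  shows "negligible (support B)"
  unfolding support_def
proof (rule negligible_Union)
  show "finite B"
    using B by (simp add: polyhedral_complex_def)
  show "negligible P" if P: "P \<in> B" for P
  proof -
    obtain Q where Q: "Q \<in> facets B" "P \<subseteq> Q"
      using exists_facet_superset[OF \<open>finite B\<close> P] by blast
    have "aff_dim Q = k"
      using pure Q(1) unfolding pure_of_dim_def by blast
    hence "aff_dim P < DIM('a)"
      using aff_dim_subset[OF Q(2)] k by linarith
    hence "interior P = {}"
      using aff_dim_nonempty_interior[of P] by auto
    moreover have "convex P"
      using polyhedral_complex_imp_polyhedron[OF B P] polyhedron_imp_convex by blast
    ultimately show ?thesis
      using negligible_convex_interior by blast
  qed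
qed

lemma mem_rel_interior_if_coplanar_cofaces:
  fixes B :: "'a::euclidean_space set set"
  assumes B: "polyhedral_complex B"
    and branching: "\<forall>\<tau>\<in>B. aff_dim \<tau> = k - 1 \<longrightarrow> card {\<sigma>\<in>B. aff_dim \<sigma> = k \<and> \<tau> \<subseteq> \<sigma>} \<ge> 3"
    and s: "s \<in> B" "aff_dim s = k" "x \<in> s"
    and coplanar: "\<And>t. t \<in> B \<Longrightarrow> x \<in> t \<Longrightarrow> aff_dim t = k \<Longrightarrow> affine hull t = A"
  shows "x \<in> rel_interior s"
proof (rule ccontr)
  assume "x \<notin> rel_interior s"
  hence "x \<in> rel_frontier s"
    using s(3) closure_subset by (auto simp: rel_frontier_def)
  then obtain F where F: "F facet_of s" "x \<in> F"
    unfolding rel_frontier_of_polyhedron[OF polyhedral_complex_imp_polyhedron[OF B s(1)]] by blast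
  have F_B: "F \<in> B"
    using B s(1) F(1) by (auto simp: polyhedral_complex_def facet_of_def)
  have F_dim: "aff_dim F = k - 1"
    using F(1) s(2) by (simp add: facet_of_def)
  obtain T where T: "T \<subseteq> {\<sigma>\<in>B. aff_dim \<sigma> = k \<and> F \<subseteq> \<sigma>}" and "card T = 3" "finite T"
    by (rule obtain_subset_with_card_n[OF branching[rule_format, OF F_B F_dim]])
  then obtain s1 s2 s3 where "T = {s1, s2, s3}" and distinct: "s1 \<noteq> s2" "s1 \<noteq> s3" "s2 \<noteq> s3"
    by (metis card_3_iff)
  with T have cofaces: "s1 \<in> B" "s2 \<in> B" "s3 \<in> B"
    and dims: "aff_dim s1 = k" "aff_dim s2 = k" "aff_dim s3 = k"
    and Fs: "F \<subseteq> s1" "F \<subseteq> s2" "F \<subseteq> s3"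
    by auto
  have "x \<in> s1" "x \<in> s2" "x \<in> s3"
    using F(2) Fs by blast+
  hence "affine hull s2 = affine hull s1" "affine hull s3 = affine hull s1"
    using coplanar cofaces dims by metis+
  moreover have "aff_dim F = aff_dim s1 - 1"
    using F_dim dims(1) by simp
  moreover have "F \<noteq> {}"
    using F(2) by blast
  ultimately show False
    using polyhedral_complex_no_three_coplanar_cofaces[OF B F_B _ cofaces distinct Fs] by blast
qed

lemma rel_interior_facet_locally_in_facet:
  fixes B C :: "'a::euclidean_space set set"
  assumes B: "polyhedral_complex B" and pure: "pure_of_dim B (int DIM('a) - 1)"
    and branching: "\<forall>\<tau>\<in>B. aff_dim \<tau> = int DIM('a) - 2 \<longrightarrow>
           card {\<sigma>\<in>B. aff_dim \<sigma> = int DIM('a) - 1 \<and> \<tau> \<subseteq> \<sigma>} \<ge> 3"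
    and C: "polyhedral_complex C" and supp: "support C = support B"
    and S: "S \<in> facets C" and s: "s \<in> facets B"
    and x: "x \<in> rel_interior S" "x \<in> s"
  shows "\<exists>e>0. ball x e \<inter> rel_interior S \<subseteq> s"
proof -
  have s_B: "s \<in> B" and s_dim: "aff_dim s = int DIM('a) - 1"
    using pure s facets_subset by (auto simp: pure_of_dim_def)
  have "S \<in> C"
    using S facets_subset by blast
  hence S_convex: "convex S" and S_supp: "S \<subseteq> support C"
    using polyhedral_complex_imp_polyhedron[OF C] polyhedron_imp_convex
    by (auto simp: support_def)
  have "negligible (support B)"
    by (rule negligible_support_of_pure[OF B pure]) simp
  hence "aff_dim S < DIM('a)"
    using aff_dim_lt_DIM_if_negligible[OF S_convex] negligible_subset S_supp supp by metis
  have coplanar: "affine hull t = affine hull S"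
    if t: "t \<in> B" "x \<in> t" "aff_dim t = int DIM('a) - 1" for t
  proof (rule affine_hull_eq_near_rel_interior_facet[OF C S x(1) _ t(2)])
    show "convex t"
      using polyhedral_complex_imp_polyhedron[OF B t(1)] polyhedron_imp_convex by blast
    show "t \<subseteq> support C"
      using t(1) supp by (auto simp: support_def)
    show "aff_dim S \<le> aff_dim t"
      using \<open>aff_dim S < DIM('a)\<close> t(3) by simp
  qed
  have "x \<in> rel_interior s"
    using mem_rel_interior_if_coplanar_cofaces[OF B _ s_B s_dim x(2) coplanar] branching
    by (simp add: algebra_simps)
  then obtain e where e: "e > 0" "ball x e \<inter> affine hull s \<subseteq> s"
    using mem_rel_interior_ball by blast
  have "rel_interior S \<subseteq> affine hull s"
    using coplanar[OF s_B x(2) s_dim] rel_interior_subset[of S] hull_subset[of S affine] by blast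
  thus ?thesis
    using e by blast
qed

lemma facet_subset_facet_if_same_support:
  fixes B C :: "'a::euclidean_space set set"
  assumes B: "polyhedral_complex B" and pure: "pure_of_dim B (int DIM('a) - 1)"
    and branching: "\<forall>\<tau>\<in>B. aff_dim \<tau> = int DIM('a) - 2 \<longrightarrow>
           card {\<sigma>\<in>B. aff_dim \<sigma> = int DIM('a) - 1 \<and> \<tau> \<subseteq> \<sigma>} \<ge> 3"
    and C: "polyhedral_complex C" and supp: "support C = support B"
    and S: "S \<in> facets C"
  shows "\<exists>s\<in>facets B. S \<subseteq> s"
proof -
  have B_finite: "finite B" and "{} \<in> B"
    using B by (auto simp: polyhedral_complex_def)
  have "S \<in> C"
    using S facets_subset by blast
  hence "polyhedron S"
    using polyhedral_complex_imp_polyhedron[OF C] by blast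
  show ?thesis
  proof (cases "rel_interior S = {}")
    case True
    with \<open>polyhedron S\<close> have "S = {}"
      using polyhedron_imp_convex rel_interior_eq_empty by blast
    thus ?thesis
      using exists_facet_superset[OF B_finite \<open>{} \<in> B\<close>] by blast
  next
    case False
    then obtain x0 where x0: "x0 \<in> rel_interior S"
      by blast
    hence "x0 \<in> support B"
      using \<open>S \<in> C\<close> rel_interior_subset[of S] supp by (auto simp: support_def)
    then obtain s where s: "s \<in> facets B" "x0 \<in> s"
      using exists_facet_superset[OF B_finite] by (auto simp: support_def)
    have "polyhedron s"
      using polyhedral_complex_imp_polyhedron[OF B] s(1) facets_subset by blast
    with \<open>polyhedron S\<close> have "S \<subseteq> s"
      using convex_subset_closed_if_locally_in[OF _ _ _ x0 s(2)]
        rel_interior_facet_locally_in_facet[OF B pure branching C supp S s(1)]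
        polyhedron_imp_convex polyhedron_imp_closed by blast
    with s(1) show ?thesis
      by blast
  qed
qed

theorem mainTheorem16:
  fixes B :: "'a::euclidean_space set set"
  assumes "polyhedral_complex B"
    and "pure_of_dim B (int DIM('a) - 1)"
    and "\<forall>\<tau>\<in>B. aff_dim \<tau> = int DIM('a) - 2 \<longrightarrow>
           card {\<sigma>\<in>B. aff_dim \<sigma> = int DIM('a) - 1 \<and> \<tau> \<subseteq> \<sigma>} \<ge> 3"
  shows "\<forall>C::'a set set. polyhedral_complex C \<and> support C = support B \<longrightarrow> refines C B"
  using facet_subset_facet_if_same_support[OF assms] unfolding refines_def by blast

end
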